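(* Let $G$ be a connected graph that is not a path, and let $B$ be (the vertex set of) a block of $G$ which is not a cut edge of a pendant path of $G$. Then every connected forcing set of $G$ contains at least $\delta(G[B])$ vertices of $B$.
   Context: Zero forcing: given a graph $G$ and a set $S$ of initially colored vertices, if a colored vertex $u$ has exactly one uncolored neighbor $v$, then $v$ becomes colored. $S$ is a zero forcing set if repeated application colors all vertices. A connected forcing set is a zero forcing set $S$ with $G[S]$ connected. A block is a maximal subgraph with no articulation point (cut vertex). A pendant path attached to a vertex $v$ is a set $P\subset V$ such that $G[P]$ is a path component of $G-v$, one of whose ends is adjacent to $v$ in $G$; a cut edge of a pendant path is an edge of the path $G[P\cup\{v\}]$ (a single-edge block lying on the pendant path together with the vertex it is attached to). $\delta(H)$ denotes the minimum degree of $H$. *)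

theory Defs
  imports Main
begin

definition graph :: "'a set \<Rightarrow> ('a \<Rightarrow> 'a \<Rightarrow> bool) \<Rightarrow> bool" where
  "graph V E \<longleftrightarrow> finite V \<and> (\<forall>x y. E x y \<longrightarrow> E y x) \<and> (\<forall>x. \<not> E x x)
     \<and> (\<forall>x y. E x y \<longrightarrow> x \<in> V \<and> y \<in> V)"

definition induced_connected :: "('a \<Rightarrow> 'a \<Rightarrow> bool) \<Rightarrow> 'a set \<Rightarrow> bool" where
  "induced_connected E X \<longleftrightarrow> X \<noteq> {} \<and>
     (\<forall>x\<in>X. \<forall>y\<in>X. (\<lambda>a b. a \<in> X \<and> b \<in> X \<and> E a b)\<^sup>*\<^sup>* x y)"

inductive_set forced :: "'a set \<Rightarrow> ('a \<Rightarrow> 'a \<Rightarrow> bool) \<Rightarrow> 'a set \<Rightarrow> 'a set"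
  for V E S where
  init: "v \<in> S \<Longrightarrow> v \<in> forced V E S"
| force: "\<lbrakk>u \<in> forced V E S; v \<in> V; E u v;
           \<forall>w\<in>V. E u w \<longrightarrow> w \<noteq> v \<longrightarrow> w \<in> forced V E S\<rbrakk> \<Longrightarrow> v \<in> forced V E S"

definition zero_forcing_set :: "'a set \<Rightarrow> ('a \<Rightarrow> 'a \<Rightarrow> bool) \<Rightarrow> 'a set \<Rightarrow> bool" where
  "zero_forcing_set V E S \<longleftrightarrow> S \<subseteq> V \<and> forced V E S = V"

definition connected_forcing_set :: "'a set \<Rightarrow> ('a \<Rightarrow> 'a \<Rightarrow> bool) \<Rightarrow> 'a set \<Rightarrow> bool" where
  "connected_forcing_set V E S \<longleftrightarrow> zero_forcing_set V E S \<and> induced_connected E S"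

definition path_order :: "('a \<Rightarrow> 'a \<Rightarrow> bool) \<Rightarrow> 'a set \<Rightarrow> 'a list \<Rightarrow> bool" where
  "path_order E X vs \<longleftrightarrow> vs \<noteq> [] \<and> distinct vs \<and> set vs = X \<and>
     (\<forall>x\<in>X. \<forall>y\<in>X. E x y \<longleftrightarrow> (\<exists>i. Suc i < length vs \<and> {vs ! i, vs ! Suc i} = {x, y}))"

definition is_path_graph :: "'a set \<Rightarrow> ('a \<Rightarrow> 'a \<Rightarrow> bool) \<Rightarrow> bool" where
  "is_path_graph V E \<longleftrightarrow> (\<exists>vs. path_order E V vs)"

definition no_cut_vertex :: "('a \<Rightarrow> 'a \<Rightarrow> bool) \<Rightarrow> 'a set \<Rightarrow> bool" where
  "no_cut_vertex E X \<longleftrightarrow> induced_connected E X \<and>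
     (\<forall>v\<in>X. X - {v} \<noteq> {} \<longrightarrow> induced_connected E (X - {v}))"

definition is_block :: "'a set \<Rightarrow> ('a \<Rightarrow> 'a \<Rightarrow> bool) \<Rightarrow> 'a set \<Rightarrow> bool" where
  "is_block V E B \<longleftrightarrow> B \<subseteq> V \<and> no_cut_vertex E B \<and>
     (\<forall>C. B \<subseteq> C \<longrightarrow> C \<subseteq> V \<longrightarrow> no_cut_vertex E C \<longrightarrow> C = B)"

text \<open>P is a pendant path attached to v: G[P] is a path component of G - v, one of whose ends
  is adjacent to v.\<close>
definition pendant_path :: "'a set \<Rightarrow> ('a \<Rightarrow> 'a \<Rightarrow> bool) \<Rightarrow> 'a \<Rightarrow> 'a set \<Rightarrow> bool" where
  "pendant_path V E v P \<longleftrightarrow> v \<in> V \<and> P \<subseteq> V - {v} \<and>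
     (\<forall>x\<in>P. \<forall>y\<in>V - {v}. E x y \<longrightarrow> y \<in> P) \<and>
     (\<exists>vs. path_order E P vs \<and> (E v (hd vs) \<or> E v (last vs)))"

definition cut_edge_of_pendant_path :: "'a set \<Rightarrow> ('a \<Rightarrow> 'a \<Rightarrow> bool) \<Rightarrow> 'a set \<Rightarrow> bool" where
  "cut_edge_of_pendant_path V E B \<longleftrightarrow>
     (\<exists>v P x y. pendant_path V E v P \<and> B = {x, y} \<and> x \<noteq> y \<and> E x y \<and>
        x \<in> P \<union> {v} \<and> y \<in> P \<union> {v})"

definition min_degree :: "('a \<Rightarrow> 'a \<Rightarrow> bool) \<Rightarrow> 'a set \<Rightarrow> nat" where
  "min_degree E X = Min ((\<lambda>w. card {u\<in>X. E w u}) ` X)"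

end

theory Submission
  imports Defs "HOL-Library.Transitive_Closure_Table"
begin

text \<open>Forbid the vertices of B to force. The process still colours at least \<delta>(G[B]) vertices
  of B: either at some moment a vertex of B could force, and then it and all but one of its
  neighbours in B are coloured, or no vertex of B ever forces and all of B gets coloured. A
  connected set of vertices outside a block has at most one neighbour in it, so the vertices of B
  coloured in this way lie in the connected set S if S meets B, and are at most one otherwise. In
  the latter case \<delta>(G[B]) = 1 would make B an edge ab with S on one side of it; the other side
  is then coloured along a single path starting at a, i.e. it is a pendant path attached to b.\<close>

definition reachable_in :: "('a \<Rightarrow> 'a \<Rightarrow> bool) \<Rightarrow> 'a set \<Rightarrow> 'a \<Rightarrow> 'a \<Rightarrow> bool" where
  "reachable_in E X = (\<lambda>a b. a \<in> X \<and> b \<in> X \<and> E a b)\<^sup>*\<^sup>*"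

definition component :: "'a set \<Rightarrow> ('a \<Rightarrow> 'a \<Rightarrow> bool) \<Rightarrow> 'a \<Rightarrow> 'a set" where
  "component X E a = {x \<in> X. reachable_in E X a x}"

lemma graph_symp: "graph V E \<Longrightarrow> symp E"
  unfolding graph_def symp_def by blast

lemma induced_connected_iff_reachable_in:
  "induced_connected E X \<longleftrightarrow> X \<noteq> {} \<and> (\<forall>x\<in>X. \<forall>y\<in>X. reachable_in E X x y)"
  unfolding induced_connected_def reachable_in_def by simp

lemma reachable_in_refl [simp]: "reachable_in E X a a"
  unfolding reachable_in_def by simp

lemma reachable_in_trans: "reachable_in E X a b \<Longrightarrow> reachable_in E X b c \<Longrightarrow> reachable_in E X a c"
  unfolding reachable_in_def by (rule rtranclp_trans)

lemma reachable_in_mono: "reachable_in E X a b \<Longrightarrow> X \<subseteq> Y \<Longrightarrow> reachable_in E Y a b"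
  unfolding reachable_in_def
  by (induction rule: rtranclp_induct) (auto intro: rtranclp.rtrancl_into_rtrancl)

lemma reachable_in_sym:
  assumes "symp E" "reachable_in E X a b"
  shows "reachable_in E X b a"
  using assms(2) unfolding reachable_in_def
  by (induction rule: rtranclp_induct)
    (use assms(1) in \<open>auto intro: converse_rtranclp_into_rtranclp dest: sympD\<close>)

lemma reachable_in_step:
  "reachable_in E X a b \<Longrightarrow> b \<in> X \<Longrightarrow> c \<in> X \<Longrightarrow> E b c \<Longrightarrow> reachable_in E X a c"
  unfolding reachable_in_def by (rule rtranclp.rtrancl_into_rtrancl) auto

lemma reachable_in_step_start:
  "E a b \<Longrightarrow> a \<in> X \<Longrightarrow> b \<in> X \<Longrightarrow> reachable_in E X b c \<Longrightarrow> reachable_in E X a c"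
  unfolding reachable_in_def by (rule converse_rtranclp_into_rtranclp) auto

lemma reachable_in_exit:
  assumes "reachable_in E X p q" "p \<in> Y" "q \<notin> Y"
  obtains y z where "reachable_in E (X \<inter> Y) p y" "y \<in> X \<inter> Y" "z \<in> X - Y" "E y z"
proof -
  have "\<exists>y z. reachable_in E (X \<inter> Y) p y \<and> y \<in> X \<inter> Y \<and> z \<in> X - Y \<and> E y z"
    using assms(1)[unfolded reachable_in_def] assms(2,3)
  proof (induction rule: converse_rtranclp_induct)
    case (step p p')
    show ?case
    proof (cases "p' \<in> Y")
      case True
      then obtain y z where "reachable_in E (X \<inter> Y) p' y" "y \<in> X \<inter> Y" "z \<in> X - Y" "E y z"
        using step by blast
      moreover have "reachable_in E (X \<inter> Y) p y"
        by (rule reachable_in_step_start[OF _ _ _ calculation(1)]) (use step True in auto)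
      ultimately show ?thesis by blast
    next
      case False
      then show ?thesis using step by (intro exI[of _ p] exI[of _ p']) auto
    qed
  qed simp
  then show thesis using that by blast
qed

lemma induced_connectedI:
  assumes "symp E" "c \<in> C" "\<And>x. x \<in> C \<Longrightarrow> reachable_in E C x c"
  shows "induced_connected E C"
  unfolding induced_connected_iff_reachable_in
proof (intro conjI ballI)
  fix x y assume "x \<in> C" "y \<in> C"
  then show "reachable_in E C x y"
    using reachable_in_trans[OF assms(3) reachable_in_sym[OF assms(1) assms(3)]] by blast
qed (use assms(2) in blast)

lemma induced_connected_Un:
  assumes sym: "symp E" and X: "induced_connected E X"
    and Y: "\<And>z. z \<in> Y \<Longrightarrow> \<exists>w\<in>X. reachable_in E (X \<union> Y) z w"
  shows "induced_connected E (X \<union> Y)"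
proof -
  obtain c where c: "c \<in> X" using X by (auto simp: induced_connected_def)
  show ?thesis
  proof (rule induced_connectedI[OF sym, of c])
    fix z assume "z \<in> X \<union> Y"
    then obtain w where w: "w \<in> X" "reachable_in E (X \<union> Y) z w"
      using Y[of z] reachable_in_refl[of E "X \<union> Y" z] by auto
    have "reachable_in E X w c" using X c w(1) by (simp add: induced_connected_iff_reachable_in)
    then have "reachable_in E (X \<union> Y) w c" by (rule reachable_in_mono) simp
    then show "reachable_in E (X \<union> Y) z c" by (rule reachable_in_trans[OF w(2)])
  qed (use c in simp)
qed

lemma rtrancl_path_set_subset:
  "rtrancl_path R x xs y \<Longrightarrow> (\<And>a b. R a b \<Longrightarrow> b \<in> X) \<Longrightarrow> x \<in> X \<Longrightarrow> set (x # xs) \<subseteq> X"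
  by (induction rule: rtrancl_path.induct) auto

lemma rtrancl_path_end_in_set: "rtrancl_path R x xs y \<Longrightarrow> y \<in> set (x # xs)"
  by (induction rule: rtrancl_path.induct) auto

lemma rtrancl_path_reachable_in_end:
  "rtrancl_path E x xs y \<Longrightarrow> z \<in> set (x # xs) \<Longrightarrow> reachable_in E (set (x # xs)) z y"
proof (induction arbitrary: z rule: rtrancl_path.induct)
  case (step x x' xs y)
  let ?W = "set (x # x' # xs)"
  have tail: "reachable_in E ?W z' y" if "z' \<in> set (x' # xs)" for z'
    using reachable_in_mono[OF step.IH[OF that], of ?W] by auto
  show ?case
  proof (cases "z = x")
    case True
    have "reachable_in E ?W x x'" using step.hyps(1) by (intro reachable_in_step[of E ?W x x x']) auto
    then show ?thesis using reachable_in_trans[OF _ tail[of x']] True by simp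
  qed (use tail step.prems in simp)
qed simp

lemma rtrancl_path_reachable_in_avoiding:
  assumes "rtrancl_path E x xs y" "distinct (x # xs)" "symp E" "z \<in> set (x # xs)" "z \<noteq> v"
  shows "(x \<noteq> v \<and> reachable_in E (set (x # xs) - {v}) z x)
       \<or> (y \<noteq> v \<and> reachable_in E (set (x # xs) - {v}) z y)"
  using assms
proof (induction arbitrary: z rule: rtrancl_path.induct)
  case (step x x' xs y)
  let ?W = "set (x # x' # xs) - {v}"
  show ?case
  proof (cases "z = x")
    case False
    then have z: "z \<in> set (x' # xs)" using step.prems by auto
    show ?thesis
    proof (cases "v = x")
      case True
      have sub: "set (x' # xs) \<subseteq> ?W" using True step.prems(1) by auto
      have "y \<in> set (x' # xs)" by (rule rtrancl_path_end_in_set[OF step.hyps(2)])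
      then show ?thesis
        using reachable_in_mono[OF rtrancl_path_reachable_in_end[OF step.hyps(2) z] sub] sub by blast
    next
      case False
      have mono: "set (x' # xs) - {v} \<subseteq> ?W" by auto
      have to_x: "reachable_in E ?W x' x" if "x' \<noteq> v"
        using sympD[OF step.prems(2) step.hyps(1)] that False
        by (intro reachable_in_step[of E ?W x' x' x]) auto
      have "distinct (x' # xs)" using step.prems(1) by simp
      from step.IH[OF this step.prems(2) z step.prems(4)]
      show ?thesis
      proof
        assume "x' \<noteq> v \<and> reachable_in E (set (x' # xs) - {v}) z x'"
        then have "reachable_in E ?W z x"
          using reachable_in_trans[OF reachable_in_mono[OF _ mono] to_x] by blast
        then show ?thesis using False by simp
      next
        assume "y \<noteq> v \<and> reachable_in E (set (x' # xs) - {v}) z y"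
        then show ?thesis using reachable_in_mono[of E _ z y, OF _ mono] by blast
      qed
    qed
  qed (use step.prems(4) in simp)
qed simp

text \<open>The hypotheses xy and ear say that P is traversed by a path from x to y, so P is an ear of X
  between the distinct vertices w1 and w2.\<close>
lemma no_cut_vertex_Un_ear:
  assumes sym: "symp E" and X: "no_cut_vertex E X" and disj: "X \<inter> P = {}"
    and w: "w1 \<in> X" "w2 \<in> X" "w1 \<noteq> w2"
    and x: "x \<in> P" "E x w1" and y: "y \<in> P" "E y w2"
    and xy: "reachable_in E P x y"
    and ear: "\<And>v z. z \<in> P - {v} \<Longrightarrow>
      (x \<noteq> v \<and> reachable_in E (P - {v}) z x) \<or> (y \<noteq> v \<and> reachable_in E (P - {v}) z y)"
  shows "no_cut_vertex E (X \<union> P)"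
proof -
  have into: "\<exists>w\<in>X'. reachable_in E (X' \<union> P') z w"
    if "reachable_in E P' z t" "t \<in> P'" "E t w" "w \<in> X'" for X' P' z t w
    using that reachable_in_mono[of E P' z t "X' \<union> P'"] reachable_in_step[of E "X' \<union> P'" z t w]
    by blast
  have to_x: "reachable_in E P z x" and to_y: "reachable_in E P z y" if "z \<in> P" for z
  proof -
    have "P - {w1} = P" using disj w(1) by blast
    then have "reachable_in E P z x \<or> reachable_in E P z y" using ear[of z w1] that by auto
    then show "reachable_in E P z x" "reachable_in E P z y"
      using reachable_in_trans[of E P z x y] reachable_in_trans[of E P z y x]
        xy reachable_in_sym[OF sym xy] by blast+
  qed
  have icX: "induced_connected E X" using X unfolding no_cut_vertex_def by blast
  show ?thesis
    unfolding no_cut_vertex_def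
  proof (intro conjI ballI impI)
    show "induced_connected E (X \<union> P)"
      using into[OF to_x x(1) x(2) w(1)] by (rule induced_connected_Un[OF sym icX])
    fix v assume "v \<in> X \<union> P"
    then consider "v \<in> X" | "v \<in> P" by blast
    then show "induced_connected E (X \<union> P - {v})"
    proof cases
      case 1
      then have eq: "X \<union> P - {v} = (X - {v}) \<union> P" using disj by blast
      obtain w t where wt: "w \<in> X - {v}" "t \<in> P" "E t w" "\<And>z. z \<in> P \<Longrightarrow> reachable_in E P z t"
        using w x y to_x to_y by (cases "v = w1") blast+
      have "induced_connected E (X - {v})"
        using X 1 wt(1) unfolding no_cut_vertex_def by blast
      then show ?thesis
        unfolding eq using into[OF wt(4) wt(2) wt(3) wt(1)] by (rule induced_connected_Un[OF sym])
    next
      case 2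
      then have eq: "X \<union> P - {v} = X \<union> (P - {v})" using disj by blast
      have "\<exists>w\<in>X. reachable_in E (X \<union> (P - {v})) z w" if "z \<in> P - {v}" for z
        using ear[OF that] into[of "P - {v}" z x w1 X] into[of "P - {v}" z y w2 X] x y w(1,2)
        by blast
      then show ?thesis
        unfolding eq by (rule induced_connected_Un[OF sym icX])
    qed
  qed
qed

text \<open>A path outside the block between two distinct attachments would be an ear, contradicting
  maximality of the block.\<close>
lemma block_attachment_unique:
  assumes G: "graph V E" and B: "is_block V E B"
    and x: "x \<in> V - B" and reach: "reachable_in E (V - B) x y"
    and w1: "w1 \<in> B" "E x w1" and w2: "w2 \<in> B" "E y w2"
  shows "w1 = w2"
proof (rule ccontr)
  assume ne: "w1 \<noteq> w2"
  have sym: "symp E" using G by (rule graph_symp)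
  obtain xs' where "rtrancl_path (\<lambda>a b. a \<in> V - B \<and> b \<in> V - B \<and> E a b) x xs' y"
    using reach rtranclp_eq_rtrancl_path unfolding reachable_in_def by metis
  then obtain xs where walk: "rtrancl_path (\<lambda>a b. a \<in> V - B \<and> b \<in> V - B \<and> E a b) x xs y"
    and dist: "distinct (x # xs)"
    by (rule rtrancl_path_distinct)
  have walkE: "rtrancl_path E x xs y" by (rule rtrancl_path_mono[OF walk]) simp
  define P where "P = set (x # xs)"
  have PVB: "P \<subseteq> V - B" unfolding P_def by (rule rtrancl_path_set_subset[OF walk]) (use x in auto)
  have "no_cut_vertex E (B \<union> P)"
  proof (rule no_cut_vertex_Un_ear[OF sym _ _ w1(1) w2(1) ne _ w1(2) _ w2(2)])
    show "no_cut_vertex E B" using B unfolding is_block_def by blast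
    show "B \<inter> P = {}" using PVB by blast
    show "x \<in> P" "y \<in> P" unfolding P_def using rtrancl_path_end_in_set[OF walkE] by auto
    show "reachable_in E P x y" unfolding P_def by (rule rtrancl_path_reachable_in_end[OF walkE]) simp
    show "(x \<noteq> v \<and> reachable_in E (P - {v}) z x) \<or> (y \<noteq> v \<and> reachable_in E (P - {v}) z y)"
      if "z \<in> P - {v}" for v z
      using rtrancl_path_reachable_in_avoiding[OF walkE dist sym, of z v] that unfolding P_def by blast
  qed
  moreover have "B \<union> P \<subseteq> V" using B PVB unfolding is_block_def by blast
  ultimately have "B \<union> P = B"
    using B[unfolded is_block_def, THEN conjunct2, THEN conjunct2, rule_format, of "B \<union> P"] by simp
  moreover have "x \<in> P" unfolding P_def by simp
  ultimately show False using PVB by blast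
qed

lemma finite_block: "graph V E \<Longrightarrow> is_block V E B \<Longrightarrow> finite B"
  unfolding graph_def is_block_def by (elim conjE) (rule finite_subset)

lemma forced_subset_closed:
  assumes "S \<subseteq> T"
    and closed: "\<And>u v. u \<in> T \<Longrightarrow> v \<in> V \<Longrightarrow> E u v \<Longrightarrow> \<forall>w\<in>V. E u w \<longrightarrow> w \<noteq> v \<longrightarrow> w \<in> T \<Longrightarrow> v \<in> T"
  shows "forced V E S \<subseteq> T"
proof
  fix x assume "x \<in> forced V E S"
  then show "x \<in> T"
  proof (induction rule: forced.induct)
    case (force u v)
    then show ?case using closed[of u v] by blast
  qed (use assms(1) in blast)
qed

text \<open>Zero forcing in which the vertices of B never force; it follows the forcing process up to
  the first force performed by a vertex of B.\<close>
inductive_set forced_outside :: "'a set \<Rightarrow> ('a \<Rightarrow> 'a \<Rightarrow> bool) \<Rightarrow> 'a set \<Rightarrow> 'a set \<Rightarrow> 'a set"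
  for V E B S where
  init: "v \<in> S \<Longrightarrow> v \<in> forced_outside V E B S"
| force: "\<lbrakk>u \<in> forced_outside V E B S; u \<notin> B; v \<in> V; E u v;
           \<forall>w\<in>V. E u w \<longrightarrow> w \<noteq> v \<longrightarrow> w \<in> forced_outside V E B S\<rbrakk> \<Longrightarrow> v \<in> forced_outside V E B S"

lemma min_degree_le_degree:
  assumes "finite B" "w \<in> B"
  shows "min_degree E B \<le> card {u \<in> B. E w u}"
  unfolding min_degree_def using assms by (auto intro!: Min_le)

text \<open>If some vertex u of B could force next, then u and all but one of its neighbours in B are
  already coloured; if none can, forcing from outside already colours all of B.\<close>
lemma min_degree_le_card_forced_outside:
  assumes G: "graph V E" and BV: "B \<subseteq> V" and B: "B \<noteq> {}" and Z: "forced V E S = V"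
  shows "min_degree E B \<le> card (forced_outside V E B S \<inter> B)"
proof -
  let ?F = "forced_outside V E B S"
  have finB: "finite B" using G BV unfolding graph_def by (blast intro: finite_subset)
  show ?thesis
  proof (cases "\<exists>u\<in>?F \<inter> B. \<exists>v\<in>V - ?F. E u v \<and> (\<forall>w\<in>V. E u w \<longrightarrow> w \<noteq> v \<longrightarrow> w \<in> ?F)")
    case True
    then obtain u v where u: "u \<in> ?F" "u \<in> B" and v: "v \<notin> ?F" "E u v"
      and others: "\<forall>w\<in>V. E u w \<longrightarrow> w \<noteq> v \<longrightarrow> w \<in> ?F" by blast
    let ?N = "{x \<in> B. E u x}"
    have finN: "finite ?N" using finB by simp
    have "insert u (?N - {v}) \<subseteq> ?F \<inter> B" using u others BV by auto
    then have "card (insert u (?N - {v})) \<le> card (?F \<inter> B)" using finB by (intro card_mono) auto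
    moreover have "u \<notin> ?N - {v}" using G unfolding graph_def by auto
    ultimately have "card (?N - {v}) + 1 \<le> card (?F \<inter> B)" using finN by simp
    moreover have "card ?N \<le> card (?N - {v}) + 1"
      using finN by (cases "v \<in> ?N") (auto simp: card_Diff_singleton)
    ultimately show ?thesis using min_degree_le_degree[OF finB u(2), of E] by linarith
  next
    case False
    have "forced V E S \<subseteq> ?F"
    proof (rule forced_subset_closed)
      show "S \<subseteq> ?F" by (auto intro: forced_outside.init)
      fix u v assume "u \<in> ?F" "v \<in> V" "E u v" "\<forall>w\<in>V. E u w \<longrightarrow> w \<noteq> v \<longrightarrow> w \<in> ?F"
      then show "v \<in> ?F" using False by (cases "u \<in> B") (blast intro: forced_outside.force)+
    qed
    then have "?F \<inter> B = B" using Z BV by auto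
    moreover obtain w where w: "w \<in> B" using B by blast
    moreover have "card {u \<in> B. E w u} \<le> card B" using finB by (intro card_mono) auto
    ultimately show ?thesis using min_degree_le_degree[OF finB w, of E] by simp
  qed
qed

lemma forced_outside_subset:
  fixes E :: "'a \<Rightarrow> 'a \<Rightarrow> bool" and B :: "'a set"
  assumes "S \<subseteq> V"
  defines "R \<equiv> {x \<in> V - B. \<exists>s\<in>S - B. reachable_in E (V - B) s x}"
  shows "forced_outside V E B S \<subseteq> S \<union> R \<union> {w \<in> B. \<exists>u\<in>R. E u w}"
proof
  fix x assume "x \<in> forced_outside V E B S"
  then show "x \<in> S \<union> R \<union> {w \<in> B. \<exists>u\<in>R. E u w}"
  proof (induction rule: forced_outside.induct)
    case (force u v)
    have u: "u \<in> R"
      using force.IH force.hyps(2) assms(1) reachable_in_refl[of E "V - B" u] unfolding R_def by blast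
    then obtain s where s: "s \<in> S - B" "reachable_in E (V - B) s u" "u \<in> V - B"
      unfolding R_def by blast
    show ?case
    proof (cases "v \<in> B")
      case False
      have "reachable_in E (V - B) s v"
        using reachable_in_step[OF s(2) s(3)] False force.hyps(3,4) by blast
      then show ?thesis using s(1) False force.hyps(3) unfolding R_def by blast
    qed (use u force.hyps(4) in blast)
  qed simp
qed

lemma forced_outside_block_subset:
  assumes G: "graph V E" and Bb: "is_block V E B" and SV: "S \<subseteq> V"
    and S: "induced_connected E S" and SB: "S \<inter> B \<noteq> {}"
  shows "forced_outside V E B S \<inter> B \<subseteq> S \<inter> B"
proof
  fix w assume w: "w \<in> forced_outside V E B S \<inter> B"
  show "w \<in> S \<inter> B"
  proof (rule ccontr)
    assume "w \<notin> S \<inter> B"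
    then obtain s u where su: "s \<in> S - B" "u \<in> V - B" "reachable_in E (V - B) s u" "E u w"
      using forced_outside_subset[OF SV] w by blast
    obtain b where b: "b \<in> S \<inter> B" using SB by blast
    have "reachable_in E S s b" using S su(1) b by (simp add: induced_connected_iff_reachable_in)
    then obtain y z where yz: "reachable_in E (S \<inter> (V - B)) s y" "y \<in> S \<inter> (V - B)"
      "z \<in> S - (V - B)" "E y z"
      using reachable_in_exit[of E S s b "V - B"] su(1) b SV by blast
    have "reachable_in E (V - B) s y" by (rule reachable_in_mono[OF yz(1)]) blast
    then have "reachable_in E (V - B) u y"
      by (rule reachable_in_trans[OF reachable_in_sym[OF graph_symp[OF G] su(3)]])
    moreover have "z \<in> B" "w \<in> B" using yz(3) w SV by auto
    ultimately have "w = z" using block_attachment_unique[OF G Bb su(2) _ _ su(4) _ yz(4)] by blast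
    then show False using \<open>w \<notin> S \<inter> B\<close> w yz(3) by blast
  qed
qed

lemma card_forced_outside_block_le_one:
  assumes G: "graph V E" and Bb: "is_block V E B" and SV: "S \<subseteq> V"
    and S: "induced_connected E S" and SB: "S \<inter> B = {}"
  shows "card (forced_outside V E B S \<inter> B) \<le> 1"
proof -
  let ?F = "forced_outside V E B S"
  have attached: "\<exists>s u. s \<in> S \<and> u \<in> V - B \<and> reachable_in E (V - B) s u \<and> E u w"
    if "w \<in> ?F \<inter> B" for w
    using forced_outside_subset[OF SV] that SB by blast
  have "w1 = w2" if w: "w1 \<in> ?F \<inter> B" "w2 \<in> ?F \<inter> B" for w1 w2
  proof -
    obtain s1 u1 where 1: "s1 \<in> S" "u1 \<in> V - B" "reachable_in E (V - B) s1 u1" "E u1 w1"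
      using attached[OF w(1)] by blast
    obtain s2 u2 where 2: "s2 \<in> S" "u2 \<in> V - B" "reachable_in E (V - B) s2 u2" "E u2 w2"
      using attached[OF w(2)] by blast
    have "reachable_in E S s1 s2" using S 1(1) 2(1) by (simp add: induced_connected_iff_reachable_in)
    then have "reachable_in E (V - B) s1 s2" by (rule reachable_in_mono) (use SV SB in blast)
    then have "reachable_in E (V - B) s1 u2" by (rule reachable_in_trans[OF _ 2(3)])
    then have "reachable_in E (V - B) u1 u2"
      by (rule reachable_in_trans[OF reachable_in_sym[OF graph_symp[OF G] 1(3)]])
    moreover have "w1 \<in> B" "w2 \<in> B" using w by auto
    ultimately show "w1 = w2" using block_attachment_unique[OF G Bb 1(2) _ _ 1(4) _ 2(4)] by blast
  qed
  moreover have "finite (?F \<inter> B)"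
    using finite_block[OF G Bb] by simp
  ultimately show ?thesis using card_le_Suc0_iff_eq[of "?F \<inter> B"] by simp
qed

lemma block_min_degree_one:
  assumes G: "graph V E" and Bb: "is_block V E B" and d: "min_degree E B = 1"
  obtains a b where "B = {a, b}" "a \<noteq> b" "E a b"
proof -
  have finB: "finite B" by (rule finite_block[OF G Bb])
  have nc: "no_cut_vertex E B" using Bb unfolding is_block_def by blast
  then have "B \<noteq> {}" unfolding no_cut_vertex_def induced_connected_def by blast
  then have "min_degree E B \<in> (\<lambda>w. card {u \<in> B. E w u}) ` B"
    unfolding min_degree_def using finB by (intro Min_in) auto
  then obtain a where a: "a \<in> B" "card {u \<in> B. E a u} = 1" using d by auto
  then obtain b where N: "{u \<in> B. E a u} = {b}" by (auto simp: card_1_singleton_iff)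
  then have b: "b \<in> B" "E a b" by auto
  then have ab: "a \<noteq> b" using G unfolding graph_def by auto
  have "z \<in> {a, b}" if z: "z \<in> B" for z
  proof (rule ccontr)
    assume "z \<notin> {a, b}"
    have "induced_connected E (B - {b})" using nc b(1) a(1) ab unfolding no_cut_vertex_def by blast
    then have "reachable_in E (B - {b}) a z"
      using a(1) z \<open>z \<notin> {a, b}\<close> ab by (simp add: induced_connected_iff_reachable_in)
    then obtain y z' where "y \<in> (B - {b}) \<inter> {a}" "z' \<in> (B - {b}) - {a}" "E y z'"
      using reachable_in_exit[of E "B - {b}" a z "{a}"] \<open>z \<notin> {a, b}\<close> by blast
    then show False using N by auto
  qed
  then have "B = {a, b}" using a(1) b(1) by blast
  then show thesis using that ab b(2) by blast
qed

text \<open>The order in which forces run along a pendant path P.\<close>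
definition forcing_chain :: "('a \<Rightarrow> 'a \<Rightarrow> bool) \<Rightarrow> 'a set \<Rightarrow> 'a list \<Rightarrow> bool" where
  "forcing_chain E P L \<longleftrightarrow> distinct L \<and> set L \<subseteq> P \<and>
     (\<forall>i. Suc i < length L \<longrightarrow> {w \<in> P. E (L ! i) w} - set (take (Suc i) L) = {L ! Suc i})"

lemma forcing_chain_snoc:
  assumes L: "forcing_chain E P L" "L \<noteq> []" and v: "v \<in> P" "v \<notin> set L"
    and next_v: "{w \<in> P. E (last L) w} - set L = {v}"
  shows "forcing_chain E P (L @ [v])"
proof -
  have "{w \<in> P. E ((L @ [v]) ! i) w} - set (take (Suc i) (L @ [v])) = {(L @ [v]) ! Suc i}"
    if "Suc i < length (L @ [v])" for i
  proof (cases "Suc i < length L")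
    case True
    then show ?thesis using L(1) by (simp add: forcing_chain_def nth_append)
  next
    case False
    then have "Suc i = length L" using that by simp
    moreover have "last L = L ! i" using L(2) calculation[symmetric] by (simp add: last_conv_nth)
    ultimately show ?thesis using next_v by (simp add: nth_append)
  qed
  then show ?thesis using L(1) v unfolding forcing_chain_def by simp
qed

lemma forcing_chain_path_order:
  assumes sym: "symp E" and irrefl: "\<And>x. \<not> E x x"
    and L: "forcing_chain E P L" "L \<noteq> []" "set L = P"
  shows "path_order E P L"
proof -
  have dist: "distinct L"
    and next_i: "\<And>i. Suc i < length L \<Longrightarrow> {w \<in> P. E (L ! i) w} - set (take (Suc i) L) = {L ! Suc i}"
    using L(1) unfolding forcing_chain_def by blast+
  have later: "Suc i < length L \<and> L ! j = L ! Suc i"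
    if "i < j" "j < length L" "E (L ! i) (L ! j)" for i j
  proof -
    have "L ! j \<in> set (drop j L)" using that(2) by (metis Cons_nth_drop_Suc list.set_intros(1))
    then have "L ! j \<notin> set (take (Suc i) L)"
      using set_take_disj_set_drop_if_distinct[OF dist, of "Suc i" j] that(1) by auto
    moreover have "L ! j \<in> P" using that(2) L(3) by auto
    ultimately show ?thesis using next_i[of i] that by auto
  qed
  show ?thesis
    unfolding path_order_def
  proof (intro conjI ballI)
    fix x y assume "x \<in> P" "y \<in> P"
    then obtain i j where i: "i < length L" "L ! i = x" and j: "j < length L" "L ! j = y"
      using L(3) by (metis in_set_conv_nth)
    show "E x y \<longleftrightarrow> (\<exists>k. Suc k < length L \<and> {L ! k, L ! Suc k} = {x, y})"
    proof
      assume "E x y"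
      have "E y x" using sympD[OF sym \<open>E x y\<close>] .
      have "i \<noteq> j" using \<open>E x y\<close> irrefl i j by auto
      then consider "i < j" | "j < i" by linarith
      then show "\<exists>k. Suc k < length L \<and> {L ! k, L ! Suc k} = {x, y}"
      proof cases
        case 1
        then show ?thesis using later[of i j] \<open>E x y\<close> i j by (intro exI[of _ i]) auto
      next
        case 2
        then show ?thesis using later[of j i] \<open>E y x\<close> i j by (intro exI[of _ j]) auto
      qed
    next
      assume "\<exists>k. Suc k < length L \<and> {L ! k, L ! Suc k} = {x, y}"
      then obtain k where k: "Suc k < length L" "{L ! k, L ! Suc k} = {x, y}" by blast
      have "E (L ! k) (L ! Suc k)" using next_i[OF k(1)] by blast
      then show "E x y" using k(2) sympD[OF sym] by (auto simp: doubleton_eq_iff)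
    qed
  qed (use L dist in auto)
qed

text \<open>A force into P outside L could only come from b, which forces just a, or from the last
  vertex of L, which would make L longer.\<close>
lemma forced_subset_longest_forcing_chain:
  assumes G: "graph V E" and SP: "S \<inter> P = {}" and P: "P \<subseteq> V - {b}"
    and closed: "\<And>x y. x \<in> P \<Longrightarrow> y \<in> V - {b} \<Longrightarrow> E x y \<Longrightarrow> y \<in> P"
    and entry: "\<And>v. v \<in> P \<Longrightarrow> E b v \<Longrightarrow> v = a"
    and L: "forcing_chain E P L" "L \<noteq> []" "hd L = a"
    and longest: "\<And>L'. forcing_chain E P L' \<Longrightarrow> L' \<noteq> [] \<Longrightarrow> hd L' = a \<Longrightarrow> length L' \<le> length L"
  shows "forced V E S \<subseteq> - P \<union> set L"
proof (rule forced_subset_closed)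
  have aL: "a \<in> set L" using L(2,3) hd_in_set by blast
  fix u v assume u: "u \<in> - P \<union> set L" and v: "v \<in> V" "E u v"
    and others: "\<forall>w\<in>V. E u w \<longrightarrow> w \<noteq> v \<longrightarrow> w \<in> - P \<union> set L"
  show "v \<in> - P \<union> set L"
  proof (rule ccontr)
    assume "v \<notin> - P \<union> set L"
    then have vP: "v \<in> P" "v \<notin> set L" by auto
    show False
    proof (cases "u \<in> P")
      case False
      moreover have "u \<in> V" using G v(2) unfolding graph_def by blast
      moreover have "E v u" using sympD[OF graph_symp[OF G] v(2)] .
      ultimately show False using closed[OF vP(1)] entry[OF vP(1)] v(2) vP(2) aL by blast
    next
      case True
      then obtain i where i: "i < length L" "L ! i = u" using u by (auto simp: in_set_conv_nth)
      show False
      proof (cases "Suc i < length L")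
        case True
        have "v \<in> {w \<in> P. E (L ! i) w} - set (take (Suc i) L)"
          using vP v(2) i(2) set_take_subset[of "Suc i" L] by auto
        then have "v = L ! Suc i" using L(1) True unfolding forcing_chain_def by blast
        then show False using vP(2) True by simp
      next
        case False
        then have "length L = Suc i" using i(1) by simp
        then have "u = last L" using i L(2) by (simp add: last_conv_nth)
        moreover have "{w \<in> P. E u w} - set L = {v}" using others vP v(2) P by auto
        ultimately have "forcing_chain E P (L @ [v])" using forcing_chain_snoc[OF L(1,2) vP] by simp
        then show False using longest[of "L @ [v]"] L(2,3) by simp
      qed
    qed
  qed
qed (use SP in blast)

lemma forced_region_is_path:
  assumes G: "graph V E" and Z: "forced V E S = V" and SP: "S \<inter> P = {}"
    and P: "P \<subseteq> V - {b}" "a \<in> P"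
    and closed: "\<And>x y. x \<in> P \<Longrightarrow> y \<in> V - {b} \<Longrightarrow> E x y \<Longrightarrow> y \<in> P"
    and entry: "\<And>v. v \<in> P \<Longrightarrow> E b v \<Longrightarrow> v = a"
  obtains L where "path_order E P L" "hd L = a"
proof -
  define chain where "chain L \<longleftrightarrow> forcing_chain E P L \<and> L \<noteq> [] \<and> hd L = a" for L
  have finP: "finite P" using G P(1) unfolding graph_def by (blast intro: finite_subset)
  have "chain [a]" using P(2) by (simp add: chain_def forcing_chain_def)
  moreover have "\<forall>L. chain L \<longrightarrow> length L < card P + 1"
  proof (intro allI impI)
    fix L assume "chain L"
    then have "distinct L" "set L \<subseteq> P" by (auto simp: chain_def forcing_chain_def)
    then show "length L < card P + 1" using card_mono[OF finP] by (metis distinct_card less_Suc_eq_le Suc_eq_plus1)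
  qed
  ultimately obtain L where L: "chain L" and longest: "\<And>L'. chain L' \<Longrightarrow> length L' \<le> length L"
    using ex_has_greatest_nat[of chain "[a]" length "card P + 1"] by blast
  have "forced V E S \<subseteq> - P \<union> set L"
    using forced_subset_longest_forcing_chain[OF G SP P(1)] closed entry L longest
    unfolding chain_def by blast
  moreover have "set L \<subseteq> P" using L unfolding chain_def forcing_chain_def by blast
  ultimately have "set L = P" using Z P(1) by blast
  then show thesis
    using that forcing_chain_path_order[OF graph_symp[OF G] _ _ _ \<open>set L = P\<close>] G L
    unfolding chain_def graph_def by blast
qed

lemma reachable_in_enters_block_edge:
  assumes B: "B = {a, b}" and s: "s \<in> V - B" and reach: "reachable_in E (V - {b}) s a"
  obtains y where "y \<in> V - B" "reachable_in E (V - B) s y" "E y a"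
proof -
  obtain y z where yz: "reachable_in E ((V - {b}) \<inter> (V - B)) s y" "y \<in> (V - {b}) \<inter> (V - B)"
    "z \<in> (V - {b}) - (V - B)" "E y z"
    using reachable_in_exit[OF reach, of "V - B"] s B by blast
  have "(V - {b}) \<inter> (V - B) = V - B" "z = a" using B yz(3) by auto
  then show thesis using that yz(1,2,4) by simp
qed

text \<open>If a connected set avoiding the block edge ab met both sides, the two paths from it to a
  and to b would make a and b two attachments of one connected set outside the block.\<close>
lemma connected_set_avoids_side_of_block_edge:
  assumes G: "graph V E" and Bb: "is_block V E B" and ab: "B = {a, b}" "a \<noteq> b"
    and SV: "S \<subseteq> V" and S: "induced_connected E S" and SB: "S \<inter> B = {}"
  shows "S \<inter> component (V - {b}) E a = {} \<or> S \<inter> component (V - {a}) E b = {}"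
proof (rule ccontr)
  assume "\<not> ?thesis"
  then obtain s1 s2 where s1: "s1 \<in> S" "reachable_in E (V - {b}) a s1"
    and s2: "s2 \<in> S" "reachable_in E (V - {a}) b s2"
    unfolding component_def by blast
  have sym: "symp E" using G by (rule graph_symp)
  have SVB: "S \<subseteq> V - B" using SV SB by blast
  obtain y1 where y1: "y1 \<in> V - B" "reachable_in E (V - B) s1 y1" "E y1 a"
    using reachable_in_enters_block_edge[OF ab(1) _ reachable_in_sym[OF sym s1(2)]] s1(1) SVB
    by blast
  obtain y2 where y2: "y2 \<in> V - B" "reachable_in E (V - B) s2 y2" "E y2 b"
    using reachable_in_enters_block_edge[of B b a, OF _ _ reachable_in_sym[OF sym s2(2)]] ab(1) s2(1) SVB
    by blast
  have "reachable_in E S s1 s2" using S s1(1) s2(1) by (simp add: induced_connected_iff_reachable_in)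
  then have "reachable_in E (V - B) s1 s2" by (rule reachable_in_mono[OF _ SVB])
  then have "reachable_in E (V - B) s1 y2" by (rule reachable_in_trans[OF _ y2(2)])
  then have "reachable_in E (V - B) y1 y2" by (rule reachable_in_trans[OF reachable_in_sym[OF sym y1(2)]])
  moreover have "a \<in> B" "b \<in> B" using ab(1) by auto
  ultimately have "a = b" using block_attachment_unique[OF G Bb y1(1) _ _ y1(3) _ y2(3)] by blast
  then show False using ab(2) by simp
qed

lemma block_edge_cut_edge_of_pendant_path:
  assumes G: "graph V E" and Bb: "is_block V E B" and ab: "B = {a, b}" "a \<noteq> b" "E a b"
    and Z: "forced V E S = V" and SP: "S \<inter> component (V - {b}) E a = {}"
  shows "cut_edge_of_pendant_path V E B"
proof -
  define P where "P = component (V - {b}) E a"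
  have sym: "symp E" using G by (rule graph_symp)
  have aV: "a \<in> V" and bV: "b \<in> V" using G ab(3) unfolding graph_def by blast+
  have aP: "a \<in> P" using aV ab(2) unfolding P_def component_def by simp
  have PV: "P \<subseteq> V - {b}" unfolding P_def component_def by blast
  have closed: "y \<in> P" if "x \<in> P" "y \<in> V - {b}" "E x y" for x y
    using that reachable_in_step[of E "V - {b}" a x y] unfolding P_def component_def by blast
  have entry: "v = a" if v: "v \<in> P" "E b v" for v
  proof (rule ccontr)
    assume "v \<noteq> a"
    then have vB: "v \<in> V - B" using v(1) ab(1) unfolding P_def component_def by blast
    have "reachable_in E (V - {b}) v a"
      using v(1) reachable_in_sym[OF sym] unfolding P_def component_def by blast
    then obtain y where y: "y \<in> V - B" "reachable_in E (V - B) v y" "E y a"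
      by (rule reachable_in_enters_block_edge[OF ab(1) vB])
    have "b = a"
      using block_attachment_unique[OF G Bb vB y(2) _ sympD[OF sym v(2)] _ y(3)] ab(1) by blast
    then show False using ab(2) by simp
  qed
  obtain L where L: "path_order E P L" "hd L = a"
    using forced_region_is_path[OF G Z SP[folded P_def] PV aP] closed entry by blast
  have "pendant_path V E b P"
    unfolding pendant_path_def using bV PV closed L sympD[OF sym ab(3)] by blast
  then show ?thesis
    unfolding cut_edge_of_pendant_path_def using ab aP by blast
qed

lemma block_min_degree_one_cut_edge:
  assumes G: "graph V E" and Bb: "is_block V E B" and d: "min_degree E B = 1"
    and SV: "S \<subseteq> V" and S: "induced_connected E S" and Z: "forced V E S = V"
    and SB: "S \<inter> B = {}"
  shows "cut_edge_of_pendant_path V E B"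
proof -
  obtain a b where ab: "B = {a, b}" "a \<noteq> b" "E a b" by (rule block_min_degree_one[OF G Bb d])
  have ba: "B = {b, a}" "b \<noteq> a" "E b a" using ab sympD[OF graph_symp[OF G]] by auto
  show ?thesis
    using connected_set_avoids_side_of_block_edge[OF G Bb ab(1,2) SV S SB]
      block_edge_cut_edge_of_pendant_path[OF G Bb ab Z]
      block_edge_cut_edge_of_pendant_path[OF G Bb ba Z]
    by blast
qed

theorem proposition3:
  fixes V :: "'a set" and E :: "'a \<Rightarrow> 'a \<Rightarrow> bool" and B S :: "'a set"
  assumes "graph V E"
    and "induced_connected E V"
    and "\<not> is_path_graph V E"
    and "is_block V E B"
    and "\<not> cut_edge_of_pendant_path V E B"
    and "connected_forcing_set V E S"
  shows "card (S \<inter> B) \<ge> min_degree E B"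
proof -
  note G = assms(1) and Bb = assms(4)
  have SV: "S \<subseteq> V" and Z: "forced V E S = V" and S: "induced_connected E S"
    using assms(6) unfolding connected_forcing_set_def zero_forcing_set_def by auto
  have BV: "B \<subseteq> V" and "B \<noteq> {}"
    using Bb unfolding is_block_def no_cut_vertex_def induced_connected_def by auto
  then have lower: "min_degree E B \<le> card (forced_outside V E B S \<inter> B)"
    using min_degree_le_card_forced_outside[OF G] Z by blast
  show ?thesis
  proof (cases "S \<inter> B = {}")
    case False
    then have "forced_outside V E B S \<inter> B \<subseteq> S \<inter> B"
      by (rule forced_outside_block_subset[OF G Bb SV S])
    then have "card (forced_outside V E B S \<inter> B) \<le> card (S \<inter> B)"
      using finite_block[OF G Bb] by (intro card_mono) auto
    then show ?thesis using lower by linarith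
  next
    case True
    then have "min_degree E B \<le> 1" using lower card_forced_outside_block_le_one[OF G Bb SV S] by linarith
    moreover have "min_degree E B \<noteq> 1"
      using block_min_degree_one_cut_edge[OF G Bb _ SV S Z True] assms(5) by blast
    ultimately show ?thesis by simp
  qed
qed

end
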